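(* Every inductive poset is divisional.
   Context: All posets are finite, have a unique minimal element $\hat0$ and are ranked; $\chi_{\mathcal{P}}(t)=\sum_x\mu(\hat0,x)t^{\operatorname{rk}(\mathcal{P})-\operatorname{rk}(x)}$ with $\operatorname{rk}(\mathcal{P})=\max\operatorname{rk}$. Atoms are rank-1 elements, $A(\mathcal{P})$ their set; $\bigvee T$ is the set of minimal upper bounds of $T$. A lattice is geometric if $y$ covers $x$ iff there is an atom $a\not\le x$ with $y=x\vee a$; $\mathcal{P}$ is locally geometric if each $\mathcal{P}_{\le x}$ is a geometric lattice. For an atom $a$: $\mathcal{P}'$ is the subposet consisting of $\hat0$ and all elements of $\bigvee T$ for nonempty $T\subseteq A(\mathcal{P})\setminus\{a\}$; $\mathcal{P}''=\mathcal{P}_{\ge a}$ (minimal element $a$, rank $\operatorname{rk}-1$). Inductive posets: smallest class of locally geometric posets containing $\{\hat0\}$ and containing $\mathcal{P}$ whenever some atom $a$ has $\mathcal{P}',\mathcal{P}''$ inductive and $\chi_{\mathcal{P}''}\mid\chi_{\mathcal{P}'}$. Divisional posets: smallest class of locally geometric posets containing $\{\hat0\}$ and containing $\mathcal{P}$ whenever some atom $a$ has $\mathcal{P}''$ divisional and $\chi_{\mathcal{P}''}\mid\chi_{\mathcal{P}}$. *)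

theory Defs
  imports Main "HOL-Computational_Algebra.Polynomial"
begin

text \<open>A poset is a finite carrier set P together with an ambient relation le
(restricted to P). Subposets (P', P'') use the same relation restricted to
a smaller carrier.\<close>

definition is_poset :: "('a \<Rightarrow> 'a \<Rightarrow> bool) \<Rightarrow> 'a set \<Rightarrow> bool" where
  "is_poset le P \<longleftrightarrow> finite P \<and> P \<noteq> {} \<and>
     (\<forall>x\<in>P. le x x) \<and>
     (\<forall>x\<in>P. \<forall>y\<in>P. le x y \<and> le y x \<longrightarrow> x = y) \<and>
     (\<forall>x\<in>P. \<forall>y\<in>P. \<forall>z\<in>P. le x y \<and> le y z \<longrightarrow> le x z)"

text \<open>Unique minimal element (for finite posets: a least element).\<close>
definition has_bottom :: "('a \<Rightarrow> 'a \<Rightarrow> bool) \<Rightarrow> 'a set \<Rightarrow> bool" where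
  "has_bottom le P \<longleftrightarrow> (\<exists>z\<in>P. \<forall>x\<in>P. le z x)"

definition bottom :: "('a \<Rightarrow> 'a \<Rightarrow> bool) \<Rightarrow> 'a set \<Rightarrow> 'a" where
  "bottom le P = (THE z. z \<in> P \<and> (\<forall>x\<in>P. le z x))"

definition covers :: "('a \<Rightarrow> 'a \<Rightarrow> bool) \<Rightarrow> 'a set \<Rightarrow> 'a \<Rightarrow> 'a \<Rightarrow> bool" where
  "covers le P x y \<longleftrightarrow> x \<in> P \<and> y \<in> P \<and> le x y \<and> x \<noteq> y \<and>
     \<not> (\<exists>z\<in>P. le x z \<and> le z y \<and> z \<noteq> x \<and> z \<noteq> y)"

definition is_rank_fun :: "('a \<Rightarrow> 'a \<Rightarrow> bool) \<Rightarrow> 'a set \<Rightarrow> ('a \<Rightarrow> nat) \<Rightarrow> bool" where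
  "is_rank_fun le P rk \<longleftrightarrow> rk (bottom le P) = 0 \<and>
     (\<forall>x\<in>P. \<forall>y\<in>P. covers le P x y \<longrightarrow> rk y = Suc (rk x))"

definition ranked :: "('a \<Rightarrow> 'a \<Rightarrow> bool) \<Rightarrow> 'a set \<Rightarrow> bool" where
  "ranked le P \<longleftrightarrow> (\<exists>rk. is_rank_fun le P rk)"

definition rank :: "('a \<Rightarrow> 'a \<Rightarrow> bool) \<Rightarrow> 'a set \<Rightarrow> 'a \<Rightarrow> nat" where
  "rank le P = (SOME rk. is_rank_fun le P rk)"

definition poset_rank :: "('a \<Rightarrow> 'a \<Rightarrow> bool) \<Rightarrow> 'a set \<Rightarrow> nat" where
  "poset_rank le P = Max (rank le P ` P)"

text \<open>Moebius function x \<mapsto> mu(0,x), determined by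
  sum_{0 <= y <= x} mu(0,y) = delta(0,x).\<close>
definition mobius :: "('a \<Rightarrow> 'a \<Rightarrow> bool) \<Rightarrow> 'a set \<Rightarrow> 'a \<Rightarrow> int" where
  "mobius le P = (THE f.
     (\<forall>x\<in>P. (\<Sum>y\<in>{y\<in>P. le y x}. f y) = (if x = bottom le P then 1 else 0)) \<and>
     (\<forall>x. x \<notin> P \<longrightarrow> f x = 0))"

definition char_poly :: "('a \<Rightarrow> 'a \<Rightarrow> bool) \<Rightarrow> 'a set \<Rightarrow> int poly" where
  "char_poly le P = (\<Sum>x\<in>P. monom (mobius le P x) (poset_rank le P - rank le P x))"

definition atoms :: "('a \<Rightarrow> 'a \<Rightarrow> bool) \<Rightarrow> 'a set \<Rightarrow> 'a set" where
  "atoms le P = {a \<in> P. covers le P (bottom le P) a}"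

definition upper_bound :: "('a \<Rightarrow> 'a \<Rightarrow> bool) \<Rightarrow> 'a set \<Rightarrow> 'a set \<Rightarrow> 'a \<Rightarrow> bool" where
  "upper_bound le P T u \<longleftrightarrow> u \<in> P \<and> (\<forall>t\<in>T. le t u)"

definition lower_bound :: "('a \<Rightarrow> 'a \<Rightarrow> bool) \<Rightarrow> 'a set \<Rightarrow> 'a set \<Rightarrow> 'a \<Rightarrow> bool" where
  "lower_bound le P T u \<longleftrightarrow> u \<in> P \<and> (\<forall>t\<in>T. le u t)"

definition is_lub :: "('a \<Rightarrow> 'a \<Rightarrow> bool) \<Rightarrow> 'a set \<Rightarrow> 'a set \<Rightarrow> 'a \<Rightarrow> bool" where
  "is_lub le P T u \<longleftrightarrow> upper_bound le P T u \<and> (\<forall>v. upper_bound le P T v \<longrightarrow> le u v)"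

definition is_glb :: "('a \<Rightarrow> 'a \<Rightarrow> bool) \<Rightarrow> 'a set \<Rightarrow> 'a set \<Rightarrow> 'a \<Rightarrow> bool" where
  "is_glb le P T u \<longleftrightarrow> lower_bound le P T u \<and> (\<forall>v. lower_bound le P T v \<longrightarrow> le v u)"

definition min_upper_bounds :: "('a \<Rightarrow> 'a \<Rightarrow> bool) \<Rightarrow> 'a set \<Rightarrow> 'a set \<Rightarrow> 'a set" where
  "min_upper_bounds le P T = {u. upper_bound le P T u \<and>
      (\<forall>v. upper_bound le P T v \<and> le v u \<longrightarrow> v = u)}"

definition is_lattice :: "('a \<Rightarrow> 'a \<Rightarrow> bool) \<Rightarrow> 'a set \<Rightarrow> bool" where
  "is_lattice le L \<longleftrightarrow> is_poset le L \<and>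
     (\<forall>x\<in>L. \<forall>y\<in>L. (\<exists>u. is_lub le L {x, y} u) \<and> (\<exists>u. is_glb le L {x, y} u))"

definition geometric :: "('a \<Rightarrow> 'a \<Rightarrow> bool) \<Rightarrow> 'a set \<Rightarrow> bool" where
  "geometric le L \<longleftrightarrow> is_lattice le L \<and>
     (\<forall>x\<in>L. \<forall>y\<in>L. covers le L x y \<longleftrightarrow>
        (\<exists>a\<in>atoms le L. \<not> le a x \<and> is_lub le L {x, a} y))"

definition down_set :: "('a \<Rightarrow> 'a \<Rightarrow> bool) \<Rightarrow> 'a set \<Rightarrow> 'a \<Rightarrow> 'a set" where
  "down_set le P x = {y \<in> P. le y x}"

definition up_set :: "('a \<Rightarrow> 'a \<Rightarrow> bool) \<Rightarrow> 'a set \<Rightarrow> 'a \<Rightarrow> 'a set" where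
  "up_set le P x = {y \<in> P. le x y}"

definition locally_geometric :: "('a \<Rightarrow> 'a \<Rightarrow> bool) \<Rightarrow> 'a set \<Rightarrow> bool" where
  "locally_geometric le P \<longleftrightarrow> is_poset le P \<and> has_bottom le P \<and> ranked le P \<and>
     (\<forall>x\<in>P. geometric le (down_set le P x))"

definition deletion :: "('a \<Rightarrow> 'a \<Rightarrow> bool) \<Rightarrow> 'a set \<Rightarrow> 'a \<Rightarrow> 'a set" where
  "deletion le P a = insert (bottom le P)
     (\<Union>{min_upper_bounds le P T | T. T \<subseteq> atoms le P - {a} \<and> T \<noteq> {}})"

definition restriction :: "('a \<Rightarrow> 'a \<Rightarrow> bool) \<Rightarrow> 'a set \<Rightarrow> 'a \<Rightarrow> 'a set" where
  "restriction le P a = up_set le P a"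

inductive inductive_poset :: "('a \<Rightarrow> 'a \<Rightarrow> bool) \<Rightarrow> 'a set \<Rightarrow> bool" for le where
  base: "locally_geometric le {z} \<Longrightarrow> inductive_poset le {z}"
| step: "locally_geometric le P \<Longrightarrow> a \<in> atoms le P \<Longrightarrow>
         inductive_poset le (deletion le P a) \<Longrightarrow>
         inductive_poset le (restriction le P a) \<Longrightarrow>
         char_poly le (restriction le P a) dvd char_poly le (deletion le P a) \<Longrightarrow>
         inductive_poset le P"

inductive divisional_poset :: "('a \<Rightarrow> 'a \<Rightarrow> bool) \<Rightarrow> 'a set \<Rightarrow> bool" for le where
  base: "locally_geometric le {z} \<Longrightarrow> divisional_poset le {z}"
| step: "locally_geometric le P \<Longrightarrow> a \<in> atoms le P \<Longrightarrow>
         divisional_poset le (restriction le P a) \<Longrightarrow>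
         char_poly le (restriction le P a) dvd char_poly le P \<Longrightarrow>
         divisional_poset le P"

end

theory Submission
  imports Defs
begin

(* Fix an atom a of a locally geometric poset P and extend the Moebius functions of
   P' and P'' by zero.  Then mu_P = mu_P' - mu_P'': for w in P, the elements of P' below w
   have a greatest element, the join of the atoms other than a below w, so the defining sum
   for mu_P' at w is 1 exactly when w is the bottom or a, which is cancelled by the sum for
   mu_P'' at a.  Covers in P' are covers in P (by geometricity of the lower intervals) and
   ranks in P'' drop by one, so the identity for mu turns into
     chi_P = t^i chi_P' - t^j chi_P''.
   Hence chi_P'' divides chi_P whenever it divides chi_P', and induction along the
   derivation of "P is inductive" gives "P is divisional". *)

lemma
  assumes "is_poset le Q"
  shows poset_refl: "x \<in> Q \<Longrightarrow> le x x"
    and poset_antisym: "x \<in> Q \<Longrightarrow> y \<in> Q \<Longrightarrow> le x y \<Longrightarrow> le y x \<Longrightarrow> x = y"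
    and poset_trans: "x \<in> Q \<Longrightarrow> y \<in> Q \<Longrightarrow> z \<in> Q \<Longrightarrow> le x y \<Longrightarrow> le y z \<Longrightarrow> le x z"
  using assms unfolding is_poset_def by blast+

lemma bottom_eqI:
  assumes "is_poset le Q" "z \<in> Q" "\<forall>x\<in>Q. le z x"
  shows "bottom le Q = z"
  unfolding bottom_def
proof (rule the_equality)
  show "z \<in> Q \<and> (\<forall>x\<in>Q. le z x)" using assms by blast
  fix w assume "w \<in> Q \<and> (\<forall>x\<in>Q. le w x)"
  then show "w = z" using assms unfolding is_poset_def by blast
qed

lemma
  assumes "is_poset le Q" "has_bottom le Q"
  shows bottom_in: "bottom le Q \<in> Q"
    and bottom_le: "x \<in> Q \<Longrightarrow> le (bottom le Q) x"
  using assms bottom_eqI unfolding has_bottom_def by metis+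

lemma is_poset_subset: "is_poset le P \<Longrightarrow> Q \<subseteq> P \<Longrightarrow> Q \<noteq> {} \<Longrightarrow> is_poset le Q"
  unfolding is_poset_def by (meson finite_subset subsetD)

lemma is_poset_converse: "is_poset le Q \<Longrightarrow> is_poset (\<lambda>x y. le y x) Q"
  unfolding is_poset_def by blast

lemma card_down_less:
  assumes "is_poset le Q" "y \<in> Q" "x \<in> Q" "le y x" "y \<noteq> x"
  shows "card {z\<in>Q. le z y} < card {z\<in>Q. le z x}"
proof (rule psubset_card_mono)
  show "finite {z\<in>Q. le z x}" using assms(1) unfolding is_poset_def by auto
  show "{z\<in>Q. le z y} \<subset> {z\<in>Q. le z x}"
    using assms unfolding is_poset_def by blast
qed

lemma ex_minimal:
  assumes "is_poset le Q" "S \<subseteq> Q" "S \<noteq> {}"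
  shows "\<exists>z\<in>S. \<forall>w\<in>S. le w z \<longrightarrow> w = z"
proof -
  have "finite S" using assms finite_subset unfolding is_poset_def by blast
  then obtain z where z: "is_arg_min (\<lambda>x. card {y\<in>Q. le y x}) (\<lambda>x. x \<in> S) z"
    using ex_is_arg_min_if_finite assms(3) by blast
  have "w = z" if "w \<in> S" "le w z" for w
    using z that card_down_less[OF assms(1), of w z] assms(2) unfolding is_arg_min_def by blast
  then show ?thesis using z unfolding is_arg_min_def by blast
qed

lemma ex_maximal:
  assumes "is_poset le Q" "S \<subseteq> Q" "S \<noteq> {}"
  shows "\<exists>z\<in>S. \<forall>w\<in>S. le z w \<longrightarrow> w = z"
  using ex_minimal[OF is_poset_converse[OF assms(1)] assms(2,3)] .

lemma ex_lower_cover: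
  assumes "is_poset le Q" "x \<in> Q" "y \<in> Q" "le x y" "x \<noteq> y"
  shows "\<exists>z\<in>Q. le x z \<and> covers le Q z y"
proof -
  let ?S = "{z\<in>Q. le x z \<and> le z y \<and> z \<noteq> y}"
  have "x \<in> ?S" using assms unfolding is_poset_def by blast
  then obtain z where "z \<in> ?S" "\<forall>w\<in>?S. le z w \<longrightarrow> w = z"
    using ex_maximal[OF assms(1), of ?S] by blast
  then show ?thesis
    using assms unfolding covers_def is_poset_def by (metis (mono_tags, lifting) mem_Collect_eq)
qed

lemma ex_upper_cover:
  assumes "is_poset le Q" "x \<in> Q" "y \<in> Q" "le x y" "x \<noteq> y"
  shows "\<exists>z\<in>Q. le z y \<and> covers le Q x z"
proof -
  let ?S = "{z\<in>Q. le x z \<and> le z y \<and> z \<noteq> x}"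
  have "y \<in> ?S" using assms unfolding is_poset_def by blast
  then obtain z where "z \<in> ?S" "\<forall>w\<in>?S. le w z \<longrightarrow> w = z"
    using ex_minimal[OF assms(1), of ?S] by blast
  then show ?thesis
    using assms unfolding covers_def is_poset_def by (metis (mono_tags, lifting) mem_Collect_eq)
qed

lemma rank_fun_unique:
  assumes "is_poset le Q" "has_bottom le Q" "is_rank_fun le Q r1" "is_rank_fun le Q r2"
    and "x \<in> Q"
  shows "r1 x = r2 x"
  using assms(5)
proof (induction "card {y\<in>Q. le y x}" arbitrary: x rule: less_induct)
  case (less x)
  show ?case
  proof (cases "x = bottom le Q")
    case True
    then show ?thesis using assms(3,4) unfolding is_rank_fun_def by simp
  next
    case False
    then obtain z where z: "z \<in> Q" "covers le Q z x"
      using ex_lower_cover[OF assms(1) bottom_in[OF assms(1,2)] less.prems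
          bottom_le[OF assms(1,2) less.prems]] by blast
    then have "r1 z = r2 z"
      using less card_down_less[OF assms(1) z(1) less.prems] unfolding covers_def by blast
    then show ?thesis using z less.prems assms(3,4) unfolding is_rank_fun_def by metis
  qed
qed

lemma rank_fun_strict_mono:
  assumes "is_poset le Q" "is_rank_fun le Q rk"
    and "x \<in> Q" "y \<in> Q" "le x y" "x \<noteq> y"
  shows "rk x < rk y"
  using assms(4-6)
proof (induction "card {w\<in>Q. le w y}" arbitrary: y rule: less_induct)
  case (less y)
  obtain z where z: "z \<in> Q" "le x z" "covers le Q z y"
    using ex_lower_cover[OF assms(1,3) less.prems] by blast
  have "rk y = Suc (rk z)" using z less.prems assms(2) unfolding is_rank_fun_def by blast
  moreover have "x \<noteq> z \<Longrightarrow> rk x < rk z"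
    using less z card_down_less[OF assms(1) z(1) less.prems(1)] unfolding covers_def by blast
  ultimately show ?case by fastforce
qed

lemma rank_is_rank_fun: "ranked le Q \<Longrightarrow> is_rank_fun le Q (rank le Q)"
  unfolding ranked_def rank_def by (metis someI_ex)

lemma rank_eqI:
  assumes "is_poset le Q" "has_bottom le Q" "ranked le Q" "is_rank_fun le Q rk" "x \<in> Q"
  shows "rank le Q x = rk x"
  using rank_fun_unique[OF assms(1,2) rank_is_rank_fun[OF assms(3)] assms(4,5)] .

lemma rank_le_poset_rank: "finite Q \<Longrightarrow> x \<in> Q \<Longrightarrow> rank le Q x \<le> poset_rank le Q"
  unfolding poset_rank_def by simp

lemma poset_rank_attained:
  assumes "finite Q" "Q \<noteq> {}"
  obtains x where "x \<in> Q" "poset_rank le Q = rank le Q x"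
proof -
  have "Max (rank le Q ` Q) \<in> rank le Q ` Q" using assms by (intro Max_in) auto
  then show thesis using that unfolding poset_rank_def by blast
qed

section \<open>The Moebius function\<close>

definition is_mobius :: "('a \<Rightarrow> 'a \<Rightarrow> bool) \<Rightarrow> 'a set \<Rightarrow> ('a \<Rightarrow> int) \<Rightarrow> bool" where
  "is_mobius le Q f \<longleftrightarrow>
     (\<forall>x\<in>Q. (\<Sum>y\<in>{y\<in>Q. le y x}. f y) = (if x = bottom le Q then 1 else 0)) \<and>
     (\<forall>x. x \<notin> Q \<longrightarrow> f x = 0)"

text \<open>The guard on the cardinality of the down-set makes the recursion terminate for every
  relation; for a poset it follows from y < x.\<close>
function mobius_rec :: "('a \<Rightarrow> 'a \<Rightarrow> bool) \<Rightarrow> 'a set \<Rightarrow> 'a \<Rightarrow> int" where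
  "mobius_rec le Q x =
     (if x \<notin> Q then 0 else if x = bottom le Q then 1 else
      - (\<Sum>y\<in>{y\<in>Q. le y x \<and> y \<noteq> x \<and> card {z\<in>Q. le z y} < card {z\<in>Q. le z x}}.
           mobius_rec le Q y))"
  by auto
termination
  by (relation "measure (\<lambda>(le, Q, x). card {z\<in>Q. le z x})") auto

declare mobius_rec.simps [simp del]

lemma is_mobius_mobius_rec:
  assumes "is_poset le Q" "has_bottom le Q"
  shows "is_mobius le Q (mobius_rec le Q)"
  unfolding is_mobius_def
proof (intro conjI ballI allI impI)
  fix x assume x: "x \<in> Q"
  have fin: "finite {y\<in>Q. le y x}" using assms(1) unfolding is_poset_def by simp
  have xin: "x \<in> {y\<in>Q. le y x}" using x assms(1) unfolding is_poset_def by blast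
  have strict: "{y\<in>Q. le y x \<and> y \<noteq> x \<and> card {z\<in>Q. le z y} < card {z\<in>Q. le z x}} =
      {y\<in>Q. le y x} - {x}"
    using card_down_less[OF assms(1) _ x] by blast
  have bot: "x = bottom le Q \<Longrightarrow> {y\<in>Q. le y x} = {x}"
    using x bottom_le[OF assms] assms(1) unfolding is_poset_def by blast
  have "(\<Sum>y\<in>{y\<in>Q. le y x}. mobius_rec le Q y) =
      mobius_rec le Q x + (\<Sum>y\<in>{y\<in>Q. le y x} - {x}. mobius_rec le Q y)"
    using sum.remove[OF fin xin] .
  also have "\<dots> = (if x = bottom le Q then 1 else 0)"
    using x bot by (subst mobius_rec.simps) (simp add: strict)
  finally show "(\<Sum>y\<in>{y\<in>Q. le y x}. mobius_rec le Q y) = (if x = bottom le Q then 1 else 0)" .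
qed (simp add: mobius_rec.simps)

lemma is_mobius_unique:
  assumes "is_poset le Q" "is_mobius le Q f" "is_mobius le Q g"
  shows "f = g"
proof
  fix x
  show "f x = g x"
  proof (cases "x \<in> Q")
    case False
    then show ?thesis using assms(2,3) unfolding is_mobius_def by simp
  next
    case True
    then show ?thesis
    proof (induction "card {y\<in>Q. le y x}" arbitrary: x rule: less_induct)
      case (less x)
      have fin: "finite {y\<in>Q. le y x}" using assms(1) unfolding is_poset_def by simp
      have xin: "x \<in> {y\<in>Q. le y x}" using less.prems assms(1) unfolding is_poset_def by blast
      have "(\<Sum>y\<in>{y\<in>Q. le y x} - {x}. f y) = (\<Sum>y\<in>{y\<in>Q. le y x} - {x}. g y)"
        using less card_down_less[OF assms(1) _ less.prems] by (intro sum.cong) auto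
      moreover have "(\<Sum>y\<in>{y\<in>Q. le y x}. f y) = (\<Sum>y\<in>{y\<in>Q. le y x}. g y)"
        using assms(2,3) less.prems unfolding is_mobius_def by simp
      ultimately show ?case using sum.remove[OF fin xin, of f] sum.remove[OF fin xin, of g] by simp
    qed
  qed
qed

lemma mobius_eqI:
  assumes "is_poset le Q" "is_mobius le Q f"
  shows "mobius le Q = f"
proof -
  have "mobius le Q = (THE f. is_mobius le Q f)"
    unfolding mobius_def is_mobius_def ..
  also have "\<dots> = f"
    using assms is_mobius_unique by (metis the_equality)
  finally show ?thesis .
qed

lemma is_mobius_mobius:
  assumes "is_poset le Q" "has_bottom le Q"
  shows "is_mobius le Q (mobius le Q)"
  using mobius_eqI[OF assms(1) is_mobius_mobius_rec[OF assms]] is_mobius_mobius_rec[OF assms] by simp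

lemma
  assumes "is_poset le Q" "has_bottom le Q"
  shows sum_mobius_down: "x \<in> Q \<Longrightarrow>
      (\<Sum>y\<in>{y\<in>Q. le y x}. mobius le Q y) = (if x = bottom le Q then 1 else 0)"
    and mobius_outside: "x \<notin> Q \<Longrightarrow> mobius le Q x = 0"
  using is_mobius_mobius[OF assms] unfolding is_mobius_def by blast+

lemma
  assumes "is_lub le L T u"
  shows is_lub_in: "u \<in> L"
    and is_lub_upper: "t \<in> T \<Longrightarrow> le t u"
    and is_lub_least: "upper_bound le L T v \<Longrightarrow> le u v"
  using assms unfolding is_lub_def upper_bound_def by blast+

lemma is_lub_unique:
  assumes "is_poset le L" "is_lub le L T u" "is_lub le L T v"
  shows "u = v"
proof -
  have ub: "upper_bound le L T u" "upper_bound le L T v"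
    using assms(2,3) unfolding is_lub_def by blast+
  then have "le u v" "le v u" using assms(2,3) unfolding is_lub_def by blast+
  moreover have "u \<in> L" "v \<in> L" using ub unfolding upper_bound_def by blast+
  ultimately show ?thesis using poset_antisym[OF assms(1)] by blast
qed

lemma is_lub_empty:
  assumes "is_poset le L" "has_bottom le L"
  shows "is_lub le L {} (bottom le L)"
  using bottom_in[OF assms] bottom_le[OF assms] unfolding is_lub_def upper_bound_def by simp

lemma is_lub_insert:
  assumes "is_poset le L" "T \<subseteq> L" "is_lub le L T x" "is_lub le L {x, b} w"
  shows "is_lub le L (insert b T) w"
proof -
  have x: "x \<in> L" "\<forall>t\<in>T. le t x" and w: "w \<in> L" "le x w" "le b w"
    using assms(3,4) unfolding is_lub_def upper_bound_def by simp_all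
  have "le t w" if "t \<in> T" for t
    using that assms(2) x(2) by (intro poset_trans[OF assms(1) _ x(1) w(1) _ w(2)]) auto
  moreover have "le w v" if "upper_bound le L (insert b T) v" for v
  proof -
    have "le x v" using that assms(3) unfolding is_lub_def upper_bound_def by simp
    then show ?thesis using that assms(4) unfolding is_lub_def upper_bound_def by simp
  qed
  ultimately show ?thesis using w unfolding is_lub_def upper_bound_def by simp
qed

lemma lattice_lub_exists:
  assumes L: "is_lattice le L" "has_bottom le L" and "finite T" "T \<subseteq> L"
  shows "\<exists>u. is_lub le L T u"
  using assms(3,4)
proof (induction T rule: finite_induct)
  case empty
  have "is_poset le L" using L(1) unfolding is_lattice_def by simp
  then show ?case using is_lub_empty L(2) by blast
next
  case (insert b T)
  then obtain x where x: "is_lub le L T x" by blast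
  then have "x \<in> L" unfolding is_lub_def upper_bound_def by simp
  then obtain w where "is_lub le L {x, b} w"
    using L(1) insert.prems unfolding is_lattice_def by blast
  moreover have "is_poset le L" using L(1) unfolding is_lattice_def by simp
  ultimately have "is_lub le L (insert b T) w"
    using insert.prems by (intro is_lub_insert[OF _ _ x]) simp_all
  then show ?case ..
qed

section \<open>Upper and lower intervals\<close>

lemma mem_restriction: "x \<in> restriction le P a \<longleftrightarrow> x \<in> P \<and> le a x"
  unfolding restriction_def up_set_def by blast

lemma restriction_subset: "restriction le P a \<subseteq> P"
  unfolding restriction_def up_set_def by blast

context
  fixes le :: "'a \<Rightarrow> 'a \<Rightarrow> bool" and P :: "'a set" and a :: 'a
  assumes P: "is_poset le P" and aP: "a \<in> P"
begin

lemma in_restriction_self: "a \<in> restriction le P a"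
  using P aP unfolding is_poset_def mem_restriction by blast

lemma restriction_is_poset: "is_poset le (restriction le P a)"
  by (rule is_poset_subset[OF P]) (use in_restriction_self in \<open>auto simp: mem_restriction\<close>)

lemma bottom_restriction: "bottom le (restriction le P a) = a"
  by (rule bottom_eqI[OF restriction_is_poset in_restriction_self]) (simp add: mem_restriction)

lemma has_bottom_restriction: "has_bottom le (restriction le P a)"
  unfolding has_bottom_def using in_restriction_self by (auto simp: mem_restriction)

lemma covers_restriction:
  assumes "covers le (restriction le P a) x y"
  shows "covers le P x y"
proof -
  have x: "x \<in> P" "le a x" using assms unfolding covers_def mem_restriction by blast+
  have "z \<in> restriction le P a" if "z \<in> P" "le x z" for z
    using poset_trans[OF P aP x(1) that(1) x(2) that(2)] that(1) unfolding mem_restriction by blast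
  then show ?thesis using assms unfolding covers_def by (auto simp: mem_restriction)
qed

lemma rank_restriction:
  assumes "has_bottom le P" "ranked le P" "ranked le (restriction le P a)"
    and "x \<in> restriction le P a"
  shows "rank le P x = rank le (restriction le P a) x + rank le P a"
proof -
  have rk: "is_rank_fun le P (rank le P)" using rank_is_rank_fun[OF assms(2)] .
  have rk_a: "rank le P a \<le> rank le P u" if "u \<in> restriction le P a" for u
    using rank_fun_strict_mono[OF P rk aP, of u] that unfolding mem_restriction by fastforce
  have "is_rank_fun le (restriction le P a) (\<lambda>x. rank le P x - rank le P a)"
    unfolding is_rank_fun_def bottom_restriction
  proof (intro conjI ballI impI)
    fix u v
    assume uv: "u \<in> restriction le P a" "v \<in> restriction le P a"
      and "covers le (restriction le P a) u v"
    then have "rank le P v = Suc (rank le P u)"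
      using rk covers_restriction unfolding is_rank_fun_def covers_def by blast
    then show "rank le P v - rank le P a = Suc (rank le P u - rank le P a)"
      using rk_a[OF uv(1)] by simp
  qed simp
  then show ?thesis
    using rank_eqI[OF restriction_is_poset has_bottom_restriction assms(3) _ assms(4)] rk_a[OF assms(4)]
    by simp
qed

lemma sum_mobius_restriction:
  assumes "w \<in> P"
  shows "(\<Sum>y\<in>{y\<in>restriction le P a. le y w}. mobius le (restriction le P a) y) =
    (if w = a then 1 else 0)"
proof (cases "le a w")
  case True
  then show ?thesis
    using sum_mobius_down[OF restriction_is_poset has_bottom_restriction] assms
    unfolding bottom_restriction mem_restriction by simp
next
  case False
  then have "{y\<in>restriction le P a. le y w} = {}"
    using poset_trans[OF P aP _ assms] unfolding mem_restriction by blast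
  moreover have "w \<noteq> a" using False poset_refl[OF P aP] by blast
  ultimately show ?thesis by (simp only: sum.empty if_False)
qed

end

lemma mem_down_set: "y \<in> down_set le P x \<longleftrightarrow> y \<in> P \<and> le y x"
  unfolding down_set_def by blast

lemma atoms_subset: "atoms le P \<subseteq> P"
  unfolding atoms_def by blast

lemma atom_ne_bottom: "b \<in> atoms le P \<Longrightarrow> b \<noteq> bottom le P"
  unfolding atoms_def covers_def by auto

lemma mem_min_upper_bounds:
  "u \<in> min_upper_bounds le P T \<Longrightarrow> u \<in> P \<and> (\<forall>t\<in>T. le t u)"
  unfolding min_upper_bounds_def upper_bound_def by blast

context
  fixes le :: "'a \<Rightarrow> 'a \<Rightarrow> bool" and P :: "'a set"
  assumes P: "is_poset le P"
begin

lemma down_set_is_poset: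
  assumes "x \<in> P"
  shows "is_poset le (down_set le P x)"
proof (rule is_poset_subset[OF P])
  show "down_set le P x \<subseteq> P" unfolding down_set_def by blast
  show "down_set le P x \<noteq> {}" using assms poset_refl[OF P assms] by (auto simp: mem_down_set)
qed

lemma bottom_down_set:
  assumes "has_bottom le P" "x \<in> P"
  shows "bottom le (down_set le P x) = bottom le P"
  by (rule bottom_eqI[OF down_set_is_poset[OF assms(2)]])
    (simp_all add: mem_down_set bottom_in[OF P assms(1)] bottom_le[OF P assms(1)] assms(2))

lemma has_bottom_down_set:
  assumes "has_bottom le P" "x \<in> P"
  shows "has_bottom le (down_set le P x)"
proof -
  have "bottom le P \<in> down_set le P x"
    using bottom_in[OF P assms(1)] bottom_le[OF P assms(1) assms(2)] by (simp add: mem_down_set)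
  then show ?thesis
    unfolding has_bottom_def using bottom_le[OF P assms(1)] mem_down_set by metis
qed

lemma covers_down_set_iff:
  assumes "x \<in> P" "u \<in> down_set le P x" "v \<in> down_set le P x"
  shows "covers le (down_set le P x) u v \<longleftrightarrow> covers le P u v"
proof -
  have uv: "u \<in> P" "v \<in> P" "le v x" using assms by (simp_all add: mem_down_set)
  have "z \<in> down_set le P x \<longleftrightarrow> z \<in> P" if "le z v" for z
    using poset_trans[OF P _ uv(2) assms(1) _ uv(3)] that by (auto simp: mem_down_set)
  then show ?thesis using assms(2,3) uv(1,2) unfolding covers_def by auto
qed

lemma atoms_down_set:
  assumes "has_bottom le P" "x \<in> P"
  shows "atoms le (down_set le P x) = {b \<in> atoms le P. le b x}"
proof -
  have bot: "bottom le P \<in> down_set le P x"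
    using bottom_in[OF P assms(1)] bottom_le[OF P assms(1) assms(2)] by (simp add: mem_down_set)
  have "b \<in> atoms le (down_set le P x) \<longleftrightarrow> b \<in> atoms le P \<and> le b x" for b
  proof (cases "b \<in> down_set le P x")
    case True
    then show ?thesis
      using covers_down_set_iff[OF assms(2) bot True]
      unfolding atoms_def bottom_down_set[OF assms] by (simp add: mem_down_set)
  next
    case False
    then show ?thesis unfolding atoms_def covers_def by (auto simp: mem_down_set)
  qed
  then show ?thesis by blast
qed

lemma atoms_le_imp_eq:
  assumes "has_bottom le P" "b \<in> atoms le P" "c \<in> atoms le P" "le b c"
  shows "b = c"
  using assms bottom_in[OF P assms(1)] bottom_le[OF P assms(1)] unfolding atoms_def covers_def
  by blast

lemma lub_atoms_down_set_eq_bottom_iff: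
  assumes "has_bottom le P" "w \<in> P" "B \<subseteq> atoms le P" "is_lub le (down_set le P w) B u"
  shows "u = bottom le P \<longleftrightarrow> B = {}"
proof
  assume B: "B = {}"
  have "is_lub le (down_set le P w) {} u" using assms(4) unfolding B .
  then show "u = bottom le P"
    using is_lub_unique[OF down_set_is_poset[OF assms(2)]]
      is_lub_empty[OF down_set_is_poset has_bottom_down_set[OF assms(1)]]
      bottom_down_set[OF assms(1)] assms(2) by metis
next
  assume u: "u = bottom le P"
  show "B = {}"
  proof (rule ccontr)
    assume "B \<noteq> {}"
    then obtain b where b: "b \<in> B" by blast
    then have bA: "b \<in> atoms le P" using assms(3) by blast
    then have "b \<in> P" "b \<noteq> bottom le P" using atoms_subset[of le P] atom_ne_bottom[OF bA] by blast+
    moreover have "le b (bottom le P)" using is_lub_upper[OF assms(4) b] u by simp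
    ultimately show False
      using poset_antisym[OF P _ bottom_in[OF P assms(1)]] bottom_le[OF P assms(1)] by blast
  qed
qed

lemma lub_down_set_imp_min_upper_bound:
  assumes "y \<in> P" "is_lub le (down_set le P y) T j"
  shows "j \<in> min_upper_bounds le P T"
proof -
  have j: "j \<in> P" "le j y" "\<forall>t\<in>T. le t j"
    using assms(2) unfolding is_lub_def upper_bound_def mem_down_set by blast+
  have "v = j" if "upper_bound le P T v" "le v j" for v
  proof -
    have "v \<in> P" using that unfolding upper_bound_def by blast
    then have "v \<in> down_set le P y" using poset_trans[OF P _ j(1) assms(1) that(2) j(2)]
      by (simp add: mem_down_set)
    then have "le j v" using assms(2) that(1) unfolding is_lub_def upper_bound_def by blast
    then show ?thesis using poset_antisym[OF P] that j(1) \<open>v \<in> P\<close> by blast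
  qed
  then show ?thesis using j unfolding min_upper_bounds_def upper_bound_def by blast
qed

lemma min_upper_bound_imp_lub_down_set:
  assumes "has_bottom le P" "is_lattice le (down_set le P y)" "y \<in> P"
    and "u \<in> min_upper_bounds le P T" "le u y" "finite T" "T \<subseteq> P"
  shows "is_lub le (down_set le P y) T u"
proof -
  have u: "u \<in> P" "\<forall>t\<in>T. le t u" using mem_min_upper_bounds[OF assms(4)] by blast+
  have "T \<subseteq> down_set le P y"
  proof
    fix t assume "t \<in> T"
    then show "t \<in> down_set le P y"
      using poset_trans[OF P _ u(1) assms(3) _ assms(5)] u(2) assms(7) by (auto simp: mem_down_set)
  qed
  then obtain j where j: "is_lub le (down_set le P y) T j"
    using lattice_lub_exists[OF assms(2) has_bottom_down_set[OF assms(1,3)] assms(6)] by blast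
  have "le j u" using j u assms(5) unfolding is_lub_def upper_bound_def mem_down_set by blast
  moreover have "upper_bound le P T j"
    using j unfolding is_lub_def upper_bound_def mem_down_set by blast
  ultimately have "j = u" using assms(4) unfolding min_upper_bounds_def by blast
  then show ?thesis using j by simp
qed

end

section \<open>Deletion and restriction of an atom\<close>

lemma rank_atom:
  assumes "is_poset le P" "has_bottom le P" "ranked le P" "a \<in> atoms le P"
  shows "rank le P a = 1"
  using rank_is_rank_fun[OF assms(3)] bottom_in[OF assms(1,2)] assms(4)
  unfolding is_rank_fun_def atoms_def by simp

lemma geometric_covers_iff:
  assumes "geometric le L" "x \<in> L" "y \<in> L"
  shows "covers le L x y \<longleftrightarrow> (\<exists>b\<in>atoms le L. \<not> le b x \<and> is_lub le L {x, b} y)"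
  using assms unfolding geometric_def by simp

lemma char_poly_shift:
  assumes "finite Q" "Q \<noteq> {}"
    and "\<And>x. x \<in> Q \<Longrightarrow> rk x = rank le Q x + d" "\<And>x. x \<in> Q \<Longrightarrow> rk x \<le> r"
  shows "(\<Sum>x\<in>Q. monom (mobius le Q x) (r - rk x)) =
    monom 1 (r - (poset_rank le Q + d)) * char_poly le Q"
proof -
  obtain x0 where "x0 \<in> Q" "poset_rank le Q = rank le Q x0"
    using poset_rank_attained[OF assms(1,2)] .
  then have top: "poset_rank le Q + d \<le> r" using assms(3,4) by fastforce
  have "monom (mobius le Q x) (r - rk x) =
      monom 1 (r - (poset_rank le Q + d)) * monom (mobius le Q x) (poset_rank le Q - rank le Q x)"
    if "x \<in> Q" for x
  proof -
    have "r - rk x = (r - (poset_rank le Q + d)) + (poset_rank le Q - rank le Q x)"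
      using assms(3)[OF that] rank_le_poset_rank[OF assms(1) that] top by simp
    then show ?thesis by (simp add: mult_monom)
  qed
  then show ?thesis unfolding char_poly_def sum_distrib_left by (rule sum.cong[OF refl])
qed

locale deletion_restriction =
  fixes le :: "'a \<Rightarrow> 'a \<Rightarrow> bool" and P :: "'a set" and a :: 'a
  assumes locally_geometric: "locally_geometric le P"
    and atom: "a \<in> atoms le P"
begin

abbreviation P' where "P' \<equiv> deletion le P a"
abbreviation P'' where "P'' \<equiv> restriction le P a"
abbreviation bot where "bot \<equiv> bottom le P"

lemma poset: "is_poset le P"
  and has_bottom: "has_bottom le P"
  and ranked: "ranked le P"
  and geometric_down_set: "x \<in> P \<Longrightarrow> geometric le (down_set le P x)"
  using locally_geometric unfolding locally_geometric_def by blast+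

lemma finite: "finite P"
  using poset unfolding is_poset_def by blast

lemma atom_in_P: "a \<in> P"
  using atom atoms_subset[of le P] by blast

lemma lattice_down_set: "x \<in> P \<Longrightarrow> is_lattice le (down_set le P x)"
  using geometric_down_set unfolding geometric_def by blast

lemma mem_deletion: "x \<in> P' \<longleftrightarrow> x = bot \<or>
    (\<exists>T. T \<subseteq> atoms le P - {a} \<and> T \<noteq> {} \<and> x \<in> min_upper_bounds le P T)"
  unfolding deletion_def by blast

lemma bottom_in_deletion: "bot \<in> P'"
  by (simp add: mem_deletion)

lemma deletion_subset: "P' \<subseteq> P"
proof
  fix x assume "x \<in> P'"
  then show "x \<in> P"
    using bottom_in[OF poset has_bottom] unfolding mem_deletion by (auto dest: mem_min_upper_bounds)
qed

lemma deletion_is_poset: "is_poset le P'"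
  using is_poset_subset[OF poset deletion_subset] bottom_in_deletion by blast

lemma bottom_deletion: "bottom le P' = bot"
  using deletion_subset bottom_le[OF poset has_bottom]
  by (intro bottom_eqI[OF deletion_is_poset bottom_in_deletion]) blast

lemma has_bottom_deletion: "has_bottom le P'"
  unfolding has_bottom_def using bottom_in_deletion deletion_subset bottom_le[OF poset has_bottom]
  by blast

lemma finite_atoms: "finite (atoms le P)"
  using finite atoms_subset[of le P] finite_subset by blast

lemma lub_empty_down_set: "y \<in> P \<Longrightarrow> is_lub le (down_set le P y) {} bot"
  using is_lub_empty[OF down_set_is_poset[OF poset] has_bottom_down_set[OF poset has_bottom]]
    bottom_down_set[OF poset has_bottom] by metis

lemma deletion_below_is_join:
  assumes "y \<in> P" "x \<in> P'" "le x y"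
  obtains T where "T \<subseteq> atoms le P - {a}" "is_lub le (down_set le P y) T x"
proof (cases "x = bot")
  case True
  then show ?thesis using that[of "{}"] lub_empty_down_set[OF assms(1)] by simp
next
  case False
  then obtain T where T: "T \<subseteq> atoms le P - {a}" "x \<in> min_upper_bounds le P T"
    using assms(2) unfolding mem_deletion by blast
  have "is_lub le (down_set le P y) T x"
    using T atoms_subset[of le P] finite_subset[OF _ finite_atoms]
    by (intro min_upper_bound_imp_lub_down_set[OF poset has_bottom lattice_down_set[OF assms(1)]
          assms(1) _ assms(3)]) auto
  then show ?thesis using that T(1) by blast
qed

lemma join_in_deletion:
  assumes "y \<in> P" "T \<subseteq> atoms le P - {a}" "is_lub le (down_set le P y) T w"
  shows "w \<in> P'"
proof (cases "T = {}")
  case True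
  then have "w = bot"
    using is_lub_unique[OF down_set_is_poset[OF poset assms(1)] assms(3)]
      lub_empty_down_set[OF assms(1)] by blast
  then show ?thesis using bottom_in_deletion by simp
next
  case False
  then show ?thesis
    using lub_down_set_imp_min_upper_bound[OF poset assms(1,3)] assms(2) unfolding mem_deletion by blast
qed

lemma join_atom_in_deletion:
  assumes "y \<in> P" "x \<in> P'" "le x y" "b \<in> atoms le P - {a}"
    and "is_lub le (down_set le P y) {x, b} w"
  shows "w \<in> P'"
proof -
  let ?L = "down_set le P y"
  obtain T where T: "T \<subseteq> atoms le P - {a}" "is_lub le ?L T x"
    using deletion_below_is_join[OF assms(1-3)] .
  have "T \<subseteq> ?L"
  proof
    fix t assume t: "t \<in> T"
    have "x \<in> P" "t \<in> P" using assms(2) deletion_subset t T(1) atoms_subset[of le P] by blast+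
    then show "t \<in> ?L"
      using poset_trans[OF poset _ _ assms(1) is_lub_upper[OF T(2) t] assms(3)]
      by (simp add: mem_down_set)
  qed
  then have "is_lub le ?L (insert b T) w"
    by (rule is_lub_insert[OF down_set_is_poset[OF poset assms(1)] _ T(2) assms(5)])
  moreover have "insert b T \<subseteq> atoms le P - {a}" using T(1) assms(4) by blast
  ultimately show ?thesis using join_in_deletion[OF assms(1)] by blast
qed

text \<open>An atom b other than a below y but not below x gives the element x \<or> b of P' strictly
  above x; if y covers x in P' this is y, and geometricity of [0, y] makes y cover x in P.\<close>

lemma covers_deletion:
  assumes "covers le P' x y"
  shows "covers le P x y"
proof -
  let ?L = "down_set le P y"
  have x: "x \<in> P'" "le x y" "x \<noteq> y" and y: "y \<in> P'"
    and between: "\<And>z. z \<in> P' \<Longrightarrow> le x z \<Longrightarrow> le z y \<Longrightarrow> z = x \<or> z = y"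
    using assms unfolding covers_def by blast+
  have xP: "x \<in> P" and yP: "y \<in> P" using x y deletion_subset by blast+
  have xL: "x \<in> ?L" and yL: "y \<in> ?L"
    using xP yP x(2) poset_refl[OF poset yP] by (simp_all add: mem_down_set)
  obtain Ty where Ty: "Ty \<subseteq> atoms le P - {a}" "is_lub le ?L Ty y"
    using deletion_below_is_join[OF yP y poset_refl[OF poset yP]] .
  have "\<exists>b\<in>Ty. \<not> le b x"
  proof (rule ccontr)
    assume "\<not> (\<exists>b\<in>Ty. \<not> le b x)"
    then have "upper_bound le ?L Ty x" using xL unfolding upper_bound_def by blast
    then have "le y x" by (rule is_lub_least[OF Ty(2)])
    then show False using poset_antisym[OF poset xP yP x(2)] x(3) by blast
  qed
  then obtain b where b: "b \<in> Ty" "\<not> le b x" by blast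
  have bP: "b \<in> P" using b(1) Ty(1) atoms_subset[of le P] by blast
  have bL: "b \<in> ?L" using bP is_lub_upper[OF Ty(2) b(1)] by (simp add: mem_down_set)
  obtain w where w: "is_lub le ?L {x, b} w"
    using lattice_down_set[OF yP] xL bL unfolding is_lattice_def by blast
  have "w \<in> P'" using join_atom_in_deletion[OF yP x(1,2) _ w] b(1) Ty(1) by blast
  moreover have "le x w" "le b w" using is_lub_upper[OF w] by simp_all
  moreover have "le w y" using is_lub_in[OF w] by (simp add: mem_down_set)
  ultimately have "w = y" using between b(2) by blast
  then have "is_lub le ?L {x, b} y" using w by simp
  moreover have "b \<in> atoms le ?L"
    using atoms_down_set[OF poset has_bottom yP] b(1) Ty(1) bL unfolding mem_down_set by blast
  ultimately have "covers le ?L x y"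
    using geometric_covers_iff[OF geometric_down_set[OF yP] xL yL] b(2) by blast
  then show ?thesis using covers_down_set_iff[OF poset yP xL yL] by blast
qed

lemma rank_deletion:
  assumes "ranked le P'" "x \<in> P'"
  shows "rank le P' x = rank le P x"
proof (rule rank_eqI[OF deletion_is_poset has_bottom_deletion assms(1) _ assms(2)])
  have rk: "is_rank_fun le P (rank le P)" using rank_is_rank_fun[OF ranked] .
  show "is_rank_fun le P' (rank le P)"
    unfolding is_rank_fun_def bottom_deletion
  proof (intro conjI ballI impI)
    show "rank le P bot = 0" using rk unfolding is_rank_fun_def by simp
    fix u v assume "covers le P' u v"
    then have uv: "covers le P u v" by (rule covers_deletion)
    then have "u \<in> P" "v \<in> P" unfolding covers_def by simp_all
    then show "rank le P v = Suc (rank le P u)" using rk uv unfolding is_rank_fun_def by blast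
  qed
qed

text \<open>The greatest element is the join of the atoms other than a below w.\<close>

lemma deletion_below_has_greatest:
  assumes "w \<in> P"
  obtains w' where "w' \<in> P'" "{y\<in>P'. le y w} = {y\<in>P'. le y w'}"
    and "w' = bot \<longleftrightarrow> (\<forall>b\<in>atoms le P - {a}. \<not> le b w)"
proof -
  let ?L = "down_set le P w" and ?B = "{b\<in>atoms le P - {a}. le b w}"
  have BL: "?B \<subseteq> ?L" using atoms_subset[of le P] by (auto simp: mem_down_set)
  obtain w' where w': "is_lub le ?L ?B w'"
    using lattice_lub_exists[OF lattice_down_set[OF assms] has_bottom_down_set[OF poset has_bottom assms]
        finite_subset[OF _ finite_atoms] BL] by blast
  have w'P: "w' \<in> P" and w'w: "le w' w" using is_lub_in[OF w'] by (simp_all add: mem_down_set)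
  have w'D: "w' \<in> P'" using join_in_deletion[OF assms _ w'] by blast
  have "y \<in> P' \<and> le y w' \<longleftrightarrow> y \<in> P' \<and> le y w" for y
  proof
    assume y: "y \<in> P' \<and> le y w"
    then obtain T where T: "T \<subseteq> atoms le P - {a}" "is_lub le ?L T y"
      using deletion_below_is_join[OF assms] by blast
    have "T \<subseteq> ?B"
    proof
      fix t assume t: "t \<in> T"
      have "t \<in> P" "y \<in> P" using t T(1) atoms_subset[of le P] y deletion_subset by blast+
      then have "le t w" using poset_trans[OF poset _ _ assms is_lub_upper[OF T(2) t]] y by blast
      then show "t \<in> ?B" using t T(1) by blast
    qed
    then have "upper_bound le ?L T w'"
      using is_lub_in[OF w'] is_lub_upper[OF w'] unfolding upper_bound_def by blast
    then show "y \<in> P' \<and> le y w'" using is_lub_least[OF T(2)] y by blast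
  next
    assume y: "y \<in> P' \<and> le y w'"
    then have "y \<in> P" using deletion_subset by blast
    then show "y \<in> P' \<and> le y w" using poset_trans[OF poset _ w'P assms _ w'w] y by blast
  qed
  then have set_eq: "{y\<in>P'. le y w} = {y\<in>P'. le y w'}" by blast
  have "w' = bot \<longleftrightarrow> ?B = {}"
    by (rule lub_atoms_down_set_eq_bottom_iff[OF poset has_bottom assms _ w']) blast
  then show thesis by (intro that[OF w'D set_eq]) blast
qed

lemma sum_mobius_deletion:
  assumes "w \<in> P"
  shows "(\<Sum>y\<in>{y\<in>P'. le y w}. mobius le P' y) =
    (if \<exists>b\<in>atoms le P - {a}. le b w then 0 else 1)"
proof -
  obtain w' where w': "w' \<in> P'" "{y\<in>P'. le y w} = {y\<in>P'. le y w'}"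
    and bot: "w' = bot \<longleftrightarrow> (\<forall>b\<in>atoms le P - {a}. \<not> le b w)"
    using deletion_below_has_greatest[OF assms] .
  show ?thesis
    using sum_mobius_down[OF deletion_is_poset has_bottom_deletion w'(1)] bot
    unfolding w'(2) bottom_deletion by auto
qed

lemma no_other_atom_below:
  assumes "b \<in> atoms le P - {a}" "w = bot \<or> w = a"
  shows "\<not> le b w"
proof
  assume "le b w"
  have bA: "b \<in> atoms le P" using assms(1) by blast
  then have bP: "b \<in> P" using atoms_subset[of le P] by blast
  from assms(2) show False
  proof
    assume "w = bot"
    then have "le b bot" using \<open>le b w\<close> by simp
    then have "b = bot"
      using poset_antisym[OF poset bP bottom_in[OF poset has_bottom]]
        bottom_le[OF poset has_bottom bP] by simp
    then show False using atom_ne_bottom[OF bA] by blast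
  next
    assume "w = a"
    then show False using atoms_le_imp_eq[OF poset has_bottom bA atom] assms(1) \<open>le b w\<close> by blast
  qed
qed

lemma ex_other_atom_below:
  assumes "w \<in> P" "w \<noteq> bot" "w \<noteq> a"
  shows "\<exists>b\<in>atoms le P - {a}. le b w"
proof -
  obtain c where c: "c \<in> P" "le c w" "covers le P bot c"
    using ex_upper_cover[OF poset bottom_in[OF poset has_bottom] assms(1)
        bottom_le[OF poset has_bottom assms(1)] assms(2)[symmetric]] by blast
  have cA: "c \<in> atoms le P" using c unfolding atoms_def by blast
  show ?thesis
  proof (cases "c = a")
    case False
    then show ?thesis using cA c(2) by blast
  next
    case True
    then obtain z where z: "z \<in> P" "le z w" "covers le P a z"
      using ex_upper_cover[OF poset atom_in_P assms(1)] c(2) assms(3) by blast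
    let ?L = "down_set le P w"
    have aL: "a \<in> ?L" and zL: "z \<in> ?L" using atom_in_P z(1,2) True c(2) by (simp_all add: mem_down_set)
    have "covers le ?L a z" using covers_down_set_iff[OF poset assms(1) aL zL] z(3) by blast
    then obtain b where b: "b \<in> atoms le ?L" "\<not> le b a"
      using geometric_covers_iff[OF geometric_down_set[OF assms(1)] aL zL] by blast
    then have "b \<in> atoms le P" "le b w" "b \<noteq> a"
      using atoms_down_set[OF poset has_bottom assms(1)] poset_refl[OF poset atom_in_P] by auto
    then show ?thesis by blast
  qed
qed

lemma mobius_deletion_restriction:
  "mobius le P = (\<lambda>x. mobius le P' x - mobius le P'' x)"
proof (rule mobius_eqI[OF poset])
  note D = deletion_is_poset has_bottom_deletion
  note R = restriction_is_poset[OF poset atom_in_P] has_bottom_restriction[OF poset atom_in_P]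
  show "is_mobius le P (\<lambda>x. mobius le P' x - mobius le P'' x)"
    unfolding is_mobius_def
  proof (intro conjI ballI allI impI)
    fix x assume "x \<notin> P"
    then have "x \<notin> P'" "x \<notin> P''" using deletion_subset restriction_subset[of le P a] by blast+
    then show "mobius le P' x - mobius le P'' x = 0"
      using mobius_outside[OF D] mobius_outside[OF R] by simp
  next
    fix w assume w: "w \<in> P"
    have "(\<Sum>y\<in>{y\<in>P. le y w}. mobius le P' y - mobius le P'' y) =
        (\<Sum>y\<in>{y\<in>P'. le y w}. mobius le P' y) - (\<Sum>y\<in>{y\<in>P''. le y w}. mobius le P'' y)"
    proof -
      have "(\<Sum>y\<in>{y\<in>P. le y w}. mobius le Q y) = (\<Sum>y\<in>{y\<in>Q. le y w}. mobius le Q y)"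
        if "Q \<subseteq> P" "\<And>x. x \<notin> Q \<Longrightarrow> mobius le Q x = 0" for Q
        by (rule sum.mono_neutral_right) (use finite that in auto)
      then show ?thesis
        using deletion_subset restriction_subset[of le P a] mobius_outside[OF D] mobius_outside[OF R]
        by (simp add: sum_subtractf)
    qed
    also have "\<dots> = (if \<exists>b\<in>atoms le P - {a}. le b w then 0 else 1) - (if w = a then 1 else 0)"
      using sum_mobius_deletion[OF w] sum_mobius_restriction[OF poset atom_in_P w] by simp
    also have "\<dots> = (if w = bot then 1 else 0)"
      using ex_other_atom_below[OF w] no_other_atom_below atom_ne_bottom[OF atom] by auto
    finally show "(\<Sum>y\<in>{y\<in>P. le y w}. mobius le P' y - mobius le P'' y) =
        (if w = bot then 1 else 0)" .
  qed
qed

lemma char_poly_deletion_restriction: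
  assumes "ranked le P'" "ranked le P''"
  shows "char_poly le P =
    monom 1 (poset_rank le P - poset_rank le P') * char_poly le P' -
    monom 1 (poset_rank le P - (poset_rank le P'' + 1)) * char_poly le P''"
proof -
  let ?r = "poset_rank le P" and ?rk = "rank le P"
  note D = deletion_is_poset has_bottom_deletion
  note R = restriction_is_poset[OF poset atom_in_P] has_bottom_restriction[OF poset atom_in_P]
  have finite_P': "finite P'" and finite_P'': "finite P''"
    using D(1) R(1) unfolding is_poset_def by simp_all
  have rk_le: "?rk x \<le> ?r" if "x \<in> P" for x
    using rank_le_poset_rank[OF finite that] .
  have "char_poly le P =
      (\<Sum>x\<in>P. monom (mobius le P' x) (?r - ?rk x)) - (\<Sum>x\<in>P. monom (mobius le P'' x) (?r - ?rk x))"
    unfolding char_poly_def mobius_deletion_restriction by (simp add: sum_subtractf flip: diff_monom)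
  also have "(\<Sum>x\<in>P. monom (mobius le P' x) (?r - ?rk x)) =
      (\<Sum>x\<in>P'. monom (mobius le P' x) (?r - ?rk x))"
    by (rule sum.mono_neutral_right) (use finite deletion_subset mobius_outside[OF D] in auto)
  also have "\<dots> = monom 1 (?r - (poset_rank le P' + 0)) * char_poly le P'"
    using rank_deletion[OF assms(1)] rk_le deletion_subset bottom_in_deletion
    by (intro char_poly_shift[OF finite_P']) auto
  also have "(\<Sum>x\<in>P. monom (mobius le P'' x) (?r - ?rk x)) =
      (\<Sum>x\<in>P''. monom (mobius le P'' x) (?r - ?rk x))"
    by (rule sum.mono_neutral_right)
      (use finite restriction_subset[of le P a] mobius_outside[OF R] in auto)
  also have "\<dots> = monom 1 (?r - (poset_rank le P'' + 1)) * char_poly le P''"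
  proof (rule char_poly_shift[OF finite_P''])
    show "P'' \<noteq> {}" using in_restriction_self[OF poset atom_in_P] by blast
    show "?rk x = rank le P'' x + 1" if "x \<in> P''" for x
      using rank_restriction[OF poset atom_in_P has_bottom ranked assms(2) that]
        rank_atom[OF poset has_bottom ranked atom] by simp
    show "?rk x \<le> ?r" if "x \<in> P''" for x
      using rk_le restriction_subset[of le P a] that by blast
  qed
  finally show ?thesis by simp
qed

end

lemma inductive_poset_locally_geometric: "inductive_poset le P \<Longrightarrow> locally_geometric le P"
  by (induction rule: inductive_poset.induct) auto

theorem proposition3p8:
  fixes le :: "'a \<Rightarrow> 'a \<Rightarrow> bool" and P :: "'a set"
  assumes "inductive_poset le P"
  shows "divisional_poset le P"
  using assms
proof (induction rule: inductive_poset.induct)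
  case (base z)
  then show ?case by (rule divisional_poset.base)
next
  case (step P a)
  interpret deletion_restriction le P a by standard fact+
  have "ranked le P'" "ranked le P''"
    using step.hyps(3,4) inductive_poset_locally_geometric unfolding locally_geometric_def by blast+
  then have "char_poly le P'' dvd char_poly le P"
    unfolding char_poly_deletion_restriction[OF \<open>ranked le P'\<close> \<open>ranked le P''\<close>]
    using step.hyps(5) by (intro dvd_diff dvd_mult) simp_all
  then show ?case by (rule divisional_poset.step[OF step.hyps(1,2) step.IH(2)])
qed

end
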